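(* In the deterministic generalized top-$k$ selective gossip setting described in the context (with $G$ connected), for any two edges $\{a,b\},\{a',b'\}\in E$ we have $\alpha_{ab}=\alpha_{a'b'}$.
   Context: Fix integers $m\ge2$, $n\ge1$, $k\in[n]$. For $v\in\mathbb{R}^n$ let $\sigma$ be a permutation of $[n]$ with $v_{\sigma(1)}\ge\cdots\ge v_{\sigma(n)}$ and set $T_k(v)=\{j\in[n]: v_j\ge v_{\sigma(k)}\}$. Let $\{i_1(t),i_2(t)\}_{t\ge0}$ be a deterministic sequence of unordered pairs of distinct agents in $[m]$, and let $E$ be the set of pairs $\{a,b\}$ with $\{i_1(t),i_2(t)\}=\{a,b\}$ for infinitely many $t$; assume the graph $G=([m],E)$ is connected. Let $X(0)\in\mathbb{R}^{m\times n}$ and define $X(t)$ by: $S(t)=T_k(X_{i_1(t)}(t))\cup T_k(X_{i_2(t)}(t))$ (where $X_i(t)$ is row $i$), $X_{ij}(t+1)=\tfrac12(X_{i_1(t)j}(t)+X_{i_2(t)j}(t))$ if $i\in\{i_1(t),i_2(t)\}$ and $j\in S(t)$, and $X_{ij}(t+1)=X_{ij}(t)$ otherwise. The limit $X(\infty)=\lim_{t\to\infty}X(t)$ exists. For $\{a,b\}\in E$ let $\beta_{ab}(s)$ be the $s$-th time $t$ with $\{i_1(t),i_2(t)\}=\{a,b\}$, let $S^\infty_{ab}=\bigcap_{t\ge0}\bigcup_{s\ge t}S(\beta_{ab}(s))$, and $\alpha_{ab}=\min_{j\in S^\infty_{ab}}X_{aj}(\infty)$ (which also equals $\min_{j\in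 S^\infty_{ab}}X_{bj}(\infty)$). *)

theory Defs
  imports Complex_Main "HOL-Library.Infinite_Set"
begin

text \<open>Agents are indexed by {0..<m}, items (columns) by {0..<n}.
  A vector v in R^n is a function nat => real, only values at j < n matter.\<close>

text \<open>k-th largest entry of v (with multiplicity), i.e. v_(sigma(k)) for a
  decreasing sorting permutation sigma; k ranges over 1..n.\<close>
definition kth_largest :: "nat \<Rightarrow> nat \<Rightarrow> (nat \<Rightarrow> real) \<Rightarrow> real" where
  "kth_largest n k v = rev (sort (map v [0..<n])) ! (k - 1)"

definition topk :: "nat \<Rightarrow> nat \<Rightarrow> (nat \<Rightarrow> real) \<Rightarrow> nat set" where
  "topk n k v = {j. j < n \<and> v j \<ge> kth_largest n k v}"

definition sel_set :: "nat \<Rightarrow> nat \<Rightarrow> (nat \<Rightarrow> nat \<Rightarrow> nat \<Rightarrow> real) \<Rightarrow> (nat \<Rightarrow> nat)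
    \<Rightarrow> (nat \<Rightarrow> nat) \<Rightarrow> nat \<Rightarrow> nat set" where
  "sel_set n k X i1 i2 t = topk n k (X t (i1 t)) \<union> topk n k (X t (i2 t))"

definition gossip_dynamics :: "nat \<Rightarrow> nat \<Rightarrow> (nat \<Rightarrow> nat \<Rightarrow> nat \<Rightarrow> real) \<Rightarrow> (nat \<Rightarrow> nat)
    \<Rightarrow> (nat \<Rightarrow> nat) \<Rightarrow> bool" where
  "gossip_dynamics n k X i1 i2 \<longleftrightarrow>
     (\<forall>t i j. X (Suc t) i j =
        (if i \<in> {i1 t, i2 t} \<and> j \<in> sel_set n k X i1 i2 t
         then (X t (i1 t) j + X t (i2 t) j) / 2 else X t i j))"

definition act_times :: "(nat \<Rightarrow> nat) \<Rightarrow> (nat \<Rightarrow> nat) \<Rightarrow> nat \<Rightarrow> nat \<Rightarrow> nat set" where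
  "act_times i1 i2 a b = {t. {i1 t, i2 t} = {a, b}}"

definition edges :: "(nat \<Rightarrow> nat) \<Rightarrow> (nat \<Rightarrow> nat) \<Rightarrow> nat set set" where
  "edges i1 i2 = {e. \<exists>a b. e = {a, b} \<and> infinite (act_times i1 i2 a b)}"

definition graph_connected :: "nat \<Rightarrow> nat set set \<Rightarrow> bool" where
  "graph_connected m E \<longleftrightarrow>
     (\<forall>a<m. \<forall>b<m. (a, b) \<in> (Restr {(x, y). {x, y} \<in> E} {0..<m})\<^sup>*)"

text \<open>beta_ab(s): the s-th activation time of {a,b} (counting from s = 0).\<close>
definition beta :: "(nat \<Rightarrow> nat) \<Rightarrow> (nat \<Rightarrow> nat) \<Rightarrow> nat \<Rightarrow> nat \<Rightarrow> nat \<Rightarrow> nat" where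
  "beta i1 i2 a b s = Infinite_Set.enumerate (act_times i1 i2 a b) s"

definition S_inf :: "nat \<Rightarrow> nat \<Rightarrow> (nat \<Rightarrow> nat \<Rightarrow> nat \<Rightarrow> real) \<Rightarrow> (nat \<Rightarrow> nat)
    \<Rightarrow> (nat \<Rightarrow> nat) \<Rightarrow> nat \<Rightarrow> nat \<Rightarrow> nat set" where
  "S_inf n k X i1 i2 a b =
     (\<Inter>t. \<Union>s\<in>{t..}. sel_set n k X i1 i2 (beta i1 i2 a b s))"

definition alpha :: "nat \<Rightarrow> nat \<Rightarrow> (nat \<Rightarrow> nat \<Rightarrow> nat \<Rightarrow> real) \<Rightarrow> (nat \<Rightarrow> nat)
    \<Rightarrow> (nat \<Rightarrow> nat) \<Rightarrow> (nat \<Rightarrow> nat \<Rightarrow> real) \<Rightarrow> nat \<Rightarrow> nat \<Rightarrow> real" where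
  "alpha n k X i1 i2 Xinf a b = Min ((\<lambda>j. Xinf a j) ` S_inf n k X i1 i2 a b)"

end

theory Submission imports Defs "HOL-Library.Multiset" begin

(* Write K_i for the k-th largest entry of the limit row Xinf_i.  Two counting facts
   about order statistics drive everything: fewer than k columns lie strictly above
   the k-th largest value, while every top-k set has at least k columns.  From
   convergence it follows that, eventually, the top-k set of agent i only contains
   columns j with Xinf_i j >= K_i.

   Fix an edge {a,b} with activation times beta(s) and limit selection S = S_inf.
   Columns of S are averaged infinitely often, so Xinf_a = Xinf_b on S; and late
   selections lie inside S.  Comparing a single late top-k set of b with the counting
   bound for a gives K_b <= K_a, hence K_a = K_b by symmetry, and from this
   alpha_ab = K_a.  Connectivity then makes K constant over all agents, which proves
   the theorem. *)


lemma card_columns_eq_length_sorted: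
  "card {j. j < n \<and> P (v j)} = length (filter P (sort (map v [0..<n])))"
proof -
  have "length (filter P (sort (map v [0..<n]))) = length (filter P (map v [0..<n]))"
    by (metis mset_filter mset_sort size_mset)
  also have "\<dots> = card {j. j < n \<and> P (v j)}"
    unfolding length_filter_conv_card by (rule arg_cong[where f = card]) auto
  finally show ?thesis by simp
qed

lemma kth_largest_sorted_nth:
  assumes "1 \<le> k" "k \<le> n"
  shows "kth_largest n k v = sort (map v [0..<n]) ! (n - k)"
  using assms by (simp add: kth_largest_def rev_nth)

lemma card_above_kth_less:
  assumes "1 \<le> k" "k \<le> n"
  shows "card {j. j < n \<and> kth_largest n k v < v j} < k"
proof -
  define M where "M = sort (map v [0..<n])"
  define p where "p = n - k"
  have len: "length M = n" and sorted: "sorted M" by (simp_all add: M_def)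
  have "card {j. j < n \<and> M ! p < v j} = card {i. i < n \<and> M ! p < M ! i}"
    using card_columns_eq_length_sorted[of n "\<lambda>x. M ! p < x" v]
      length_filter_conv_card[of "\<lambda>x. M ! p < x" M] len M_def by simp
  also have "\<dots> \<le> card {p<..<n}"
  proof (rule card_mono)
    show "{i. i < n \<and> M ! p < M ! i} \<subseteq> {p<..<n}"
    proof
      fix i assume i: "i \<in> {i. i < n \<and> M ! p < M ! i}"
      have "p < i"
      proof (rule ccontr)
        assume "\<not> p < i"
        then have "M ! i \<le> M ! p" using sorted_nth_mono[OF sorted] len p_def assms by simp
        then show False using i by simp
      qed
      then show "i \<in> {p<..<n}" using i by simp
    qed
  qed simp
  also have "\<dots> < k" using assms p_def by simp
  finally show ?thesis using kth_largest_sorted_nth[OF assms] M_def p_def by simp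
qed

lemma k_le_card_topk:
  assumes "1 \<le> k" "k \<le> n"
  shows "k \<le> card (topk n k v)"
proof -
  define M where "M = sort (map v [0..<n])"
  define p where "p = n - k"
  have len: "length M = n" and sorted: "sorted M" by (simp_all add: M_def)
  have "k = card {p..<n}" using assms p_def by simp
  also have "\<dots> \<le> card {i. i < n \<and> M ! p \<le> M ! i}"
    by (rule card_mono) (use sorted_nth_mono[OF sorted] len in auto)
  also have "\<dots> = card {j. j < n \<and> M ! p \<le> v j}"
    using card_columns_eq_length_sorted[of n "\<lambda>x. M ! p \<le> x" v]
      length_filter_conv_card[of "\<lambda>x. M ! p \<le> x" M] len M_def by simp
  finally show ?thesis
    using kth_largest_sorted_nth[OF assms] M_def p_def by (simp add: topk_def)
qed

lemma not_all_above_kth: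
  assumes "1 \<le> k" "k \<le> n" "k \<le> card A"
  shows "\<not> A \<subseteq> {j. j < n \<and> kth_largest n k v < v j}"
proof
  assume "A \<subseteq> {j. j < n \<and> kth_largest n k v < v j}"
  then have "card A \<le> card {j. j < n \<and> kth_largest n k v < v j}"
    by (rule card_mono[rotated]) simp
  with assms card_above_kth_less[OF assms(1,2), of v] show False by simp
qed

(* If the rows Y t converge to y, then eventually every top-k column of Y t is a column
   where y reaches its own k-th largest value: columns strictly below it are eventually
   beaten by all (at least k) columns at or above it. *)
lemma topk_eventually_above_limit_kth:
  fixes Y :: "nat \<Rightarrow> nat \<Rightarrow> real"
  assumes k: "1 \<le> k" "k \<le> n" and conv: "\<And>j. j < n \<Longrightarrow> (\<lambda>t. Y t j) \<longlonglongrightarrow> y j"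
  shows "eventually (\<lambda>t. topk n k (Y t) \<subseteq> {j. kth_largest n k y \<le> y j}) sequentially"
proof -
  define K where "K = kth_largest n k y"
  define G where "G = topk n k y"
  have "eventually (\<lambda>t. y j < K \<longrightarrow> j \<notin> topk n k (Y t)) sequentially" if "j < n" for j
  proof (cases "y j < K")
    case True
    define c where "c = (y j + K) / 2"
    have below: "eventually (\<lambda>t. Y t j < c) sequentially"
      using order_tendstoD(2)[OF conv[OF \<open>j < n\<close>]] True c_def by auto
    have "eventually (\<lambda>t. c < Y t j') sequentially" if "j' \<in> G" for j'
    proof -
      have "j' < n" "c < y j'" using that True by (auto simp: G_def topk_def c_def K_def)
      then show ?thesis using order_tendstoD(1)[OF conv] by blast
    qed
    then have above: "eventually (\<lambda>t. \<forall>j'\<in>G. c < Y t j') sequentially"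
      by (intro eventually_ball_finite) (auto simp: G_def topk_def)
    show ?thesis using below above
    proof eventually_elim
      case (elim t)
      show ?case
      proof (intro impI notI)
        assume "j \<in> topk n k (Y t)"
        then have "G \<subseteq> {j'. j' < n \<and> kth_largest n k (Y t) < Y t j'}"
          using elim by (fastforce simp: topk_def G_def)
        moreover have "k \<le> card G" unfolding G_def by (rule k_le_card_topk[OF k])
        ultimately show False using not_all_above_kth[OF k] by blast
      qed
    qed
  qed simp
  then have "eventually (\<lambda>t. \<forall>j\<in>{..<n}. y j < K \<longrightarrow> j \<notin> topk n k (Y t)) sequentially"
    by (intro eventually_ball_finite) auto
  then show ?thesis
    by (rule eventually_mono) (auto simp: topk_def K_def not_less)
qed


locale topk_gossip =
  fixes m n k :: nat
    and i1 i2 :: "nat \<Rightarrow> nat"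
    and X :: "nat \<Rightarrow> nat \<Rightarrow> nat \<Rightarrow> real"
    and Xinf :: "nat \<Rightarrow> nat \<Rightarrow> real"
  assumes k_pos: "1 \<le> k" and k_le_n: "k \<le> n"
    and agents_lt: "\<And>t. i1 t < m" "\<And>t. i2 t < m"
    and dynamics: "gossip_dynamics n k X i1 i2"
    and converges: "\<And>i j. i < m \<Longrightarrow> j < n \<Longrightarrow> (\<lambda>t. X t i j) \<longlonglongrightarrow> Xinf i j"
begin

abbreviation threshold :: "nat \<Rightarrow> real" where
  "threshold i \<equiv> kth_largest n k (Xinf i)"

context
  fixes a b :: nat
  assumes edge: "{a, b} \<in> edges i1 i2"
begin

lemma edge_activated_infinitely: "infinite (act_times i1 i2 a b)"
proof -
  obtain c d where "{a, b} = {c, d}" "infinite (act_times i1 i2 c d)"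
    using edge unfolding edges_def by blast
  then show ?thesis by (simp add: act_times_def)
qed

lemma edge_is_activated: "{i1 (beta i1 i2 a b s), i2 (beta i1 i2 a b s)} = {a, b}"
  using enumerate_in_set[OF edge_activated_infinitely]
  by (simp add: beta_def act_times_def)

lemma edge_agents_lt: "a < m" "b < m"
  using edge_is_activated[of 0] agents_lt[of "beta i1 i2 a b 0"] by (auto simp: doubleton_eq_iff)

lemma activation_times_strict_mono: "strict_mono (beta i1 i2 a b)"
  unfolding beta_def by (rule strict_mono_enumerate[OF edge_activated_infinitely])

lemma selection_at_activation:
  "sel_set n k X i1 i2 (beta i1 i2 a b s)
     = topk n k (X (beta i1 i2 a b s) a) \<union> topk n k (X (beta i1 i2 a b s) b)"
  using edge_is_activated[of s] unfolding sel_set_def by (auto simp: doubleton_eq_iff)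

lemma mem_S_inf_iff:
  "j \<in> S_inf n k X i1 i2 a b \<longleftrightarrow> (\<forall>t. \<exists>s\<ge>t. j \<in> sel_set n k X i1 i2 (beta i1 i2 a b s))"
  unfolding S_inf_def by auto

lemma S_inf_subset: "S_inf n k X i1 i2 a b \<subseteq> {..<n}"
  using selection_at_activation by (auto simp: mem_S_inf_iff topk_def)

(* A column selected infinitely often is averaged between a and b arbitrarily late,
   so the two limits agree on it. *)
lemma limits_agree_on_S_inf:
  assumes "j \<in> S_inf n k X i1 i2 a b"
  shows "Xinf a j = Xinf b j"
proof (rule ccontr)
  assume ne: "Xinf a j \<noteq> Xinf b j"
  have "j < n" using assms S_inf_subset by auto
  define f where "f t = X (Suc t) a j - X (Suc t) b j" for t
  have "f \<longlonglongrightarrow> Xinf a j - Xinf b j"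
    unfolding f_def using edge_agents_lt \<open>j < n\<close> by (intro tendsto_diff LIMSEQ_Suc converges)
  then have "eventually (\<lambda>t. f t \<noteq> 0) sequentially"
    by (rule tendsto_imp_eventually_ne) (use ne in simp)
  then obtain N where N: "\<And>t. N \<le> t \<Longrightarrow> f t \<noteq> 0" by (auto simp: eventually_sequentially)
  obtain s where s: "N \<le> s" "j \<in> sel_set n k X i1 i2 (beta i1 i2 a b s)"
    using assms mem_S_inf_iff by blast
  have "f (beta i1 i2 a b s) = 0"
    using dynamics s(2) edge_is_activated[of s] unfolding f_def gossip_dynamics_def by auto
  moreover have "N \<le> beta i1 i2 a b s"
    using s(1) strict_mono_imp_increasing[OF activation_times_strict_mono] le_trans by blast
  ultimately show False using N by blast
qed

(* Columns outside S_inf are selected only finitely often, so late selections lie in S_inf. *)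
lemma selection_eventually_in_S_inf:
  "eventually (\<lambda>s. sel_set n k X i1 i2 (beta i1 i2 a b s) \<subseteq> S_inf n k X i1 i2 a b) sequentially"
proof -
  have "eventually (\<lambda>s. j \<notin> S_inf n k X i1 i2 a b \<longrightarrow> j \<notin> sel_set n k X i1 i2 (beta i1 i2 a b s))
          sequentially" for j
    by (cases "j \<in> S_inf n k X i1 i2 a b") (auto simp: mem_S_inf_iff eventually_sequentially)
  then have "eventually (\<lambda>s. \<forall>j\<in>{..<n}. j \<notin> S_inf n k X i1 i2 a b
               \<longrightarrow> j \<notin> sel_set n k X i1 i2 (beta i1 i2 a b s)) sequentially"
    by (intro eventually_ball_finite) auto
  then show ?thesis
    by (rule eventually_mono) (auto simp: selection_at_activation topk_def)
qed

lemma late_topk_above_threshold: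
  assumes "i \<in> {a, b}"
  shows "eventually (\<lambda>s. topk n k (X (beta i1 i2 a b s) i) \<subseteq> {j. threshold i \<le> Xinf i j})
           sequentially"
proof -
  have "i < m" using assms edge_agents_lt by auto
  have "eventually (\<lambda>t. topk n k (X t i) \<subseteq> {j. threshold i \<le> Xinf i j}) sequentially"
    by (rule topk_eventually_above_limit_kth[OF k_pos k_le_n]) (rule converges[OF \<open>i < m\<close>])
  then show ?thesis
    by (rule eventually_compose_filterlim[OF _ filterlim_subseq[OF activation_times_strict_mono]])
qed

lemma late_activation:
  obtains s where "topk n k (X s a) \<subseteq> S_inf n k X i1 i2 a b \<inter> {j. threshold a \<le> Xinf a j}"
    and "topk n k (X s b) \<subseteq> S_inf n k X i1 i2 a b \<inter> {j. threshold b \<le> Xinf b j}"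
proof -
  have "eventually (\<lambda>s. sel_set n k X i1 i2 (beta i1 i2 a b s) \<subseteq> S_inf n k X i1 i2 a b
          \<and> topk n k (X (beta i1 i2 a b s) a) \<subseteq> {j. threshold a \<le> Xinf a j}
          \<and> topk n k (X (beta i1 i2 a b s) b) \<subseteq> {j. threshold b \<le> Xinf b j}) sequentially"
    by (rule eventually_conj[OF selection_eventually_in_S_inf eventually_conj[OF
          late_topk_above_threshold[OF insertI1] late_topk_above_threshold[OF insertI2[OF singletonI]]]])
  then obtain s where late: "sel_set n k X i1 i2 (beta i1 i2 a b s) \<subseteq> S_inf n k X i1 i2 a b"
      "topk n k (X (beta i1 i2 a b s) a) \<subseteq> {j. threshold a \<le> Xinf a j}"
      "topk n k (X (beta i1 i2 a b s) b) \<subseteq> {j. threshold b \<le> Xinf b j}"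
    unfolding eventually_sequentially by blast
  show ?thesis
  proof (rule that)
    show "topk n k (X (beta i1 i2 a b s) a) \<subseteq> S_inf n k X i1 i2 a b \<inter> {j. threshold a \<le> Xinf a j}"
      using late selection_at_activation[of s] by blast
    show "topk n k (X (beta i1 i2 a b s) b) \<subseteq> S_inf n k X i1 i2 a b \<inter> {j. threshold b \<le> Xinf b j}"
      using late selection_at_activation[of s] by blast
  qed
qed

(* The late top-k set of b has k columns with Xinf_a = Xinf_b >= K_b; they cannot all
   lie strictly above K_a, so K_b <= K_a. *)
lemma threshold_le: "threshold b \<le> threshold a"
proof (rule ccontr)
  assume "\<not> threshold b \<le> threshold a"
  obtain s where "topk n k (X s b) \<subseteq> S_inf n k X i1 i2 a b \<inter> {j. threshold b \<le> Xinf b j}"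
    by (rule late_activation)
  then have "topk n k (X s b) \<subseteq> {j. j < n \<and> threshold a < Xinf a j}"
    using \<open>\<not> threshold b \<le> threshold a\<close> limits_agree_on_S_inf S_inf_subset by fastforce
  then show False using not_all_above_kth[OF k_pos k_le_n k_le_card_topk[OF k_pos k_le_n]] by blast
qed

(* Some column of S_inf has Xinf_a at most K_a: the late top-k set of a cannot lie
   entirely above K_a. *)
lemma S_inf_meets_threshold: "\<exists>j\<in>S_inf n k X i1 i2 a b. Xinf a j \<le> threshold a"
proof (rule ccontr)
  assume none: "\<not> (\<exists>j\<in>S_inf n k X i1 i2 a b. Xinf a j \<le> threshold a)"
  obtain s where late: "topk n k (X s a) \<subseteq> S_inf n k X i1 i2 a b \<inter> {j. threshold a \<le> Xinf a j}"
    by (rule late_activation)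
  have "topk n k (X s a) \<subseteq> {j. j < n \<and> threshold a < Xinf a j}"
  proof
    fix j assume "j \<in> topk n k (X s a)"
    then have "j \<in> S_inf n k X i1 i2 a b" using late by blast
    then show "j \<in> {j. j < n \<and> threshold a < Xinf a j}"
      using none S_inf_subset by (auto simp: not_le)
  qed
  then show False using not_all_above_kth[OF k_pos k_le_n k_le_card_topk[OF k_pos k_le_n]] by blast
qed

(* Every column of S_inf is selected late, hence lies above the threshold of a or of b. *)
lemma S_inf_above_threshold:
  assumes "j \<in> S_inf n k X i1 i2 a b"
  shows "threshold a \<le> Xinf a j \<or> threshold b \<le> Xinf b j"
proof -
  have "eventually (\<lambda>s. topk n k (X (beta i1 i2 a b s) a) \<subseteq> {j. threshold a \<le> Xinf a j}
          \<and> topk n k (X (beta i1 i2 a b s) b) \<subseteq> {j. threshold b \<le> Xinf b j}) sequentially"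
    by (rule eventually_conj[OF late_topk_above_threshold[OF insertI1]
          late_topk_above_threshold[OF insertI2[OF singletonI]]])
  then obtain N where N: "\<And>s. N \<le> s \<Longrightarrow>
      topk n k (X (beta i1 i2 a b s) a) \<subseteq> {j. threshold a \<le> Xinf a j}
      \<and> topk n k (X (beta i1 i2 a b s) b) \<subseteq> {j. threshold b \<le> Xinf b j}"
    by (auto simp: eventually_sequentially)
  obtain s where "N \<le> s" "j \<in> sel_set n k X i1 i2 (beta i1 i2 a b s)"
    using assms mem_S_inf_iff by blast
  then have "j \<in> topk n k (X (beta i1 i2 a b s) a) \<union> topk n k (X (beta i1 i2 a b s) b)"
    by (simp only: selection_at_activation)
  then show ?thesis using N[OF \<open>N \<le> s\<close>] by blast
qed

end

lemma threshold_edge_eq: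
  assumes "{a, b} \<in> edges i1 i2"
  shows "threshold a = threshold b"
  using threshold_le[OF assms] threshold_le[of b a] assms by (simp add: insert_commute)

lemma alpha_edge_eq_threshold:
  assumes edge: "{a, b} \<in> edges i1 i2"
  shows "alpha n k X i1 i2 Xinf a b = threshold a"
proof -
  define S where "S = S_inf n k X i1 i2 a b"
  have "finite S" using S_inf_subset[OF edge] finite_subset S_def by blast
  obtain j0 where "j0 \<in> S" "Xinf a j0 \<le> threshold a"
    using S_inf_meets_threshold[OF edge] S_def by blast
  moreover have "\<forall>j\<in>S. threshold a \<le> Xinf a j"
    using S_inf_above_threshold[OF edge] limits_agree_on_S_inf[OF edge] threshold_edge_eq[OF edge]
    by (auto simp: S_def)
  ultimately have "Min ((\<lambda>j. Xinf a j) ` S) = threshold a"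
    using \<open>finite S\<close> by (intro antisym Min_le_iff[THEN iffD2] Min_ge_iff[THEN iffD2]) auto
  then show ?thesis unfolding alpha_def S_def .
qed

lemma threshold_constant:
  assumes "graph_connected m (edges i1 i2)" "a < m" "a' < m"
  shows "threshold a = threshold a'"
proof -
  have "(a, a') \<in> (Restr {(x, y). {x, y} \<in> edges i1 i2} {0..<m})\<^sup>*"
    using assms unfolding graph_connected_def by blast
  then show ?thesis
    by (induction rule: rtrancl_induct) (auto dest: threshold_edge_eq)
qed

end

theorem mainTheorem5:
  fixes m n k :: nat
    and i1 i2 :: "nat \<Rightarrow> nat"
    and X :: "nat \<Rightarrow> nat \<Rightarrow> nat \<Rightarrow> real"
    and Xinf :: "nat \<Rightarrow> nat \<Rightarrow> real"
  assumes "m \<ge> 2" and "n \<ge> 1" and "1 \<le> k" and "k \<le> n"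
    and "\<And>t. i1 t < m" and "\<And>t. i2 t < m" and "\<And>t. i1 t \<noteq> i2 t"
    and "graph_connected m (edges i1 i2)"
    and "gossip_dynamics n k X i1 i2"
    and "\<And>i j. i < m \<Longrightarrow> j < n \<Longrightarrow> (\<lambda>t. X t i j) \<longlonglongrightarrow> Xinf i j"
    and "{a, b} \<in> edges i1 i2" and "{a', b'} \<in> edges i1 i2"
  shows "alpha n k X i1 i2 Xinf a b = alpha n k X i1 i2 Xinf a' b'"
proof -
  interpret topk_gossip m n k i1 i2 X Xinf
    using assms(3-6,9,10) by unfold_locales auto
  have "threshold a = threshold a'"
    using threshold_constant[OF assms(8)] edge_agents_lt[OF assms(11)] edge_agents_lt[OF assms(12)]
    by blast
  then show ?thesis
    using alpha_edge_eq_threshold[OF assms(11)] alpha_edge_eq_threshold[OF assms(12)] by simp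
qed

end
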